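(* Let $n\ge 3$ and let $BP_n$ be the $n$-gonal bipyramid. If $n$ is odd, $BP_n$ is $z$-knotted. If $n=2k$ with $k$ odd, $BP_n$ has exactly two zigzags up to reversal. If $n=2k$ with $k$ even, $BP_n$ has exactly four zigzags up to reversal.
   Context: The $n$-gonal bipyramid $BP_n$ ($n\ge3$) is the triangulation of the sphere with vertices $1,\dots,n,a,b$, edges $i(i+1)$ (indices mod $n$, the base), $ai$ and $bi$ for all $i$, and faces $\{a,i,i+1\}$, $\{b,i,i+1\}$. A zigzag in a triangulation is a sequence of edges $(e_i)$ such that $e_i,e_{i+1}$ are distinct edges of a common face, the face containing $e_i,e_{i+1}$ differs from the face containing $e_{i+1},e_{i+2}$, and $e_i,e_{i+2}$ have no common vertex; it is regarded as a cyclic sequence, and its reversal $Z^{-1}$ is also a zigzag with $Z\ne Z^{-1}$. A triangulation is $z$-knotted if it has exactly two zigzags $Z$ and $Z^{-1}$. *)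

theory Defs
  imports Main
begin

text \<open>A triangulation is given by its set of faces F, each face a 3-element vertex set.
Edges are 2-element subsets of faces.\<close>

definition tri_edges :: "'v set set \<Rightarrow> 'v set set" where
  "tri_edges F = {e. card e = 2 \<and> (\<exists>f\<in>F. e \<subseteq> f)}"

text \<open>The face containing two distinct edges of a common (triangular) face is their union.\<close>
definition common_face :: "'v set set \<Rightarrow> 'v set \<Rightarrow> 'v set \<Rightarrow> bool" where
  "common_face F e e' \<longleftrightarrow> e \<in> tri_edges F \<and> e' \<in> tri_edges F \<and> e \<noteq> e' \<and> e \<union> e' \<in> F"

text \<open>A zigzag, represented by one period (a list) of the cyclic sequence of edges;
the period is minimal (the list is primitive: no nontrivial rotation fixes it).\<close>
definition zigzag_word :: "'v set set \<Rightarrow> 'v set list \<Rightarrow> bool" where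
  "zigzag_word F xs \<longleftrightarrow> xs \<noteq> [] \<and>
     (\<forall>i < length xs.
        let m = length xs; e0 = xs ! i; e1 = xs ! ((i+1) mod m); e2 = xs ! ((i+2) mod m) in
        common_face F e0 e1 \<and> common_face F e1 e2 \<and>
        e0 \<union> e1 \<noteq> e1 \<union> e2 \<and> e0 \<inter> e2 = {}) \<and>
     (\<forall>k. 0 < k \<and> k < length xs \<longrightarrow> rotate k xs \<noteq> xs)"

definition cyc :: "'a list \<Rightarrow> 'a list set" where
  "cyc xs = range (\<lambda>k. rotate k xs)"

definition zigzags :: "'v set set \<Rightarrow> 'v set list set set" where
  "zigzags F = {cyc xs | xs. zigzag_word F xs}"

definition zz_rev :: "'a list set \<Rightarrow> 'a list set" where
  "zz_rev Z = rev ` Z"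

definition zigzags_up_to_reversal :: "'v set set \<Rightarrow> 'v set list set set set" where
  "zigzags_up_to_reversal F = {{Z, zz_rev Z} | Z. Z \<in> zigzags F}"

definition z_knotted :: "'v set set \<Rightarrow> bool" where
  "z_knotted F \<longleftrightarrow> (\<exists>Z. Z \<noteq> zz_rev Z \<and> zigzags F = {Z, zz_rev Z})"

text \<open>Bipyramid: base vertices Bv 0..Bv (n-1) (indices mod n), apexes Ta (=a), Tb (=b).\<close>
datatype bpv = Bv nat | Ta | Tb

definition bipyramid :: "nat \<Rightarrow> bpv set set" where
  "bipyramid n = (\<Union>i<n. {{Ta, Bv i, Bv (Suc i mod n)}, {Tb, Bv i, Bv (Suc i mod n)}})"

end

theory Submission
  imports Defs
begin

text \<open>
  Each edge of the bipyramid lies in exactly two faces, so a zigzag is determined by two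
  consecutive edges. Starting with the edge \<open>a c\<close>, the zigzag \<open>Z\<^sub>c\<close> (\<open>zigzag_edge c\<close>) runs through
  \<open>a c, c (c+1), b (c+1), b (c+2), (c+2) (c+3), a (c+3), a (c+4), \<dots>\<close>: six steps advance the
  base index by \<open>4\<close>. Every pair of edges of a common face occurs consecutively in such a
  \<open>Z\<^sub>c\<close>, in one of the two directions, so every zigzag is \<open>Z\<^sub>c\<close> or its reversal.
  \<open>Z\<^sub>c\<close> has period \<open>6 n / gcd 4 n\<close>, \<open>Z\<^sub>c = Z\<^sub>d\<close> exactly when \<open>c \<equiv> d (mod gcd 4 n)\<close>, and no
  \<open>Z\<^sub>c\<close> is the reversal of a \<open>Z\<^sub>d\<close>. Hence there are exactly \<open>gcd 4 n\<close> zigzags up to reversal,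
  which is \<open>1\<close>, \<open>2\<close> or \<open>4\<close> in the three cases of the theorem.
\<close>

section \<open>Periodic integer sequences and cyclic lists\<close>

definition minimal_period :: "(int \<Rightarrow> 'a) \<Rightarrow> nat \<Rightarrow> bool" where
  "minimal_period f P \<longleftrightarrow> 0 < P \<and> (\<forall>m. f (m + int P) = f m) \<and>
     (\<forall>t. 0 < t \<and> t < P \<longrightarrow> (\<exists>m. f (m + int t) \<noteq> f m))"

lemma periodic_add_mult:
  fixes f :: "int \<Rightarrow> 'a"
  assumes per: "\<And>m. f (m + P) = f m"
  shows "f (m + P * t) = f m"
proof (induction t rule: int_induct[of _ 0])
  case (step1 t)
  then show ?case using per[of "m + P * t"] by (simp add: algebra_simps)
next
  case (step2 t)
  then show ?case using per[of "m + P * (t - 1)"] by (simp add: algebra_simps)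
qed simp

lemma periodic_mod:
  fixes f :: "int \<Rightarrow> 'a"
  assumes "\<And>m. f (m + P) = f m"
  shows "f (m mod P) = f m"
  using periodic_add_mult[of f P "m mod P" "m div P", OF assms] by simp

lemma minimal_period_reflect:
  "minimal_period f P \<Longrightarrow> minimal_period (\<lambda>y. f (- y)) P"
  unfolding minimal_period_def
proof (elim conjE, intro conjI allI impI)
  fix m assume "\<forall>m. f (m + int P) = f m"
  then have "f (- (m + int P) + int P) = f (- (m + int P))" by blast
  then show "f (- (m + int P)) = f (- m)" by simp
next
  fix t assume "\<forall>t. 0 < t \<and> t < P \<longrightarrow> (\<exists>m. f (m + int t) \<noteq> f m)" "0 < t \<and> t < P"
  then obtain m where "f (m + int t) \<noteq> f m" by blast
  then show "\<exists>m. f (- (m + int t)) \<noteq> f (- m)"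
    by (intro exI[of _ "- m - int t"]) (simp add: add.commute)
qed

definition period_list :: "(int \<Rightarrow> 'a) \<Rightarrow> nat \<Rightarrow> 'a list" where
  "period_list f P = map (\<lambda>j. f (int j)) [0..<P]"

lemma length_period_list [simp]: "length (period_list f P) = P"
  by (simp add: period_list_def)

lemma nth_period_list [simp]: "j < P \<Longrightarrow> period_list f P ! j = f (int j)"
  by (simp add: period_list_def)

lemma nth_mod_period_list:
  assumes "\<And>m. f (m + int P) = f m" "0 < P"
  shows "period_list f P ! (j mod P) = f (int j)"
  using assms periodic_mod[of f "int P" "int j"] by (simp add: zmod_int)

lemma nth_rotate_period_list:
  assumes "\<And>m. f (m + int P) = f m" "i < P"
  shows "rotate k (period_list f P) ! i = f (int k + int i)"
  using assms nth_mod_period_list[of f P "k + i"] by (simp add: nth_rotate)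

lemma period_list_shift:
  fixes f :: "int \<Rightarrow> 'a"
  assumes per: "\<And>m. f (m + int P) = f m"
  shows "map (\<lambda>j. f (a + int j)) [0..<P] = rotate (nat (a mod int P)) (period_list f P)"
proof (rule nth_equalityI)
  fix i assume "i < length (map (\<lambda>j. f (a + int j)) [0..<P])"
  then have i: "i < P" by simp
  let ?k = "nat (a mod int P)"
  have "int ((?k + i) mod P) = (a + int i) mod int P"
    using i by (simp add: zmod_int mod_add_left_eq)
  then have "rotate ?k (period_list f P) ! i = f ((a + int i) mod int P)"
    using i by (simp add: nth_rotate)
  also have "\<dots> = f (a + int i)" using periodic_mod[of f "int P", OF per] .
  finally show "map (\<lambda>j. f (a + int j)) [0..<P] ! i = rotate ?k (period_list f P) ! i"
    using i by simp
qed simp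

lemma cyc_rotate [simp]: "cyc (rotate k xs) = cyc xs"
proof -
  have undo: "rotate a xs = rotate (a + (length xs - 1) * k) (rotate k xs)" for a
  proof (cases "xs = []")
    case False
    then have "a + (length xs - 1) * k + k = a + length xs * k"
      by (cases "length xs") auto
    then show ?thesis by (metis mod_mult_self2 rotate_conv_mod rotate_rotate)
  qed simp
  show ?thesis unfolding cyc_def
  proof (intro equalityI subsetI)
    fix ys assume "ys \<in> range (\<lambda>a. rotate a (rotate k xs))"
    then show "ys \<in> range (\<lambda>a. rotate a xs)" by (auto simp only: rotate_rotate)
  next
    fix ys assume "ys \<in> range (\<lambda>a. rotate a xs)"
    then show "ys \<in> range (\<lambda>a. rotate a (rotate k xs))" using undo by blast
  qed
qed

lemma rev_rotate: "rev (rotate k xs) = rotate (length xs - k mod length xs) (rev xs)"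
proof (cases "xs = [] \<or> k mod length xs = 0")
  case True
  then show ?thesis by auto
next
  case False
  then show ?thesis using rotate_conv_mod[of k xs] by (simp add: rotate_rev)
qed

lemma zz_rev_cyc: "zz_rev (cyc xs) = cyc (rev xs)"
  unfolding zz_rev_def cyc_def
proof (intro equalityI subsetI)
  fix ys assume "ys \<in> rev ` range (\<lambda>k. rotate k xs)"
  then show "ys \<in> range (\<lambda>k. rotate k (rev xs))" by (auto simp only: rev_rotate)
next
  fix ys assume "ys \<in> range (\<lambda>k. rotate k (rev xs))"
  then show "ys \<in> rev ` range (\<lambda>k. rotate k xs)" by (auto simp only: rotate_rev)
qed

lemma in_cyc_self: "xs \<in> cyc xs"
  unfolding cyc_def by (metis rangeI rotate0 id_apply)

lemma cyc_eqD: "cyc xs = cyc ys \<Longrightarrow> \<exists>k. ys = rotate k xs"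
  using in_cyc_self[of ys] unfolding cyc_def by auto

lemma cyc_rev_period_list:
  fixes f :: "int \<Rightarrow> 'a"
  assumes per: "\<And>m. f (m + int P) = f m"
  shows "cyc (rev (period_list f P)) = cyc (period_list (\<lambda>y. f (- y)) P)"
proof -
  have per': "f (- (m + int P)) = f (- m)" for m
    using periodic_add_mult[of f "int P" "- m" "-1", OF per] by simp
  have "rev (period_list f P) = map (\<lambda>j. f (- ((1 - int P) + int j))) [0..<P]"
    by (rule nth_equalityI) (auto simp: period_list_def rev_nth of_nat_diff algebra_simps)
  also have "\<dots> = rotate (nat ((1 - int P) mod int P)) (period_list (\<lambda>y. f (- y)) P)"
    by (rule period_list_shift[where f = "\<lambda>y. f (- y)"]) (rule per')
  finally show ?thesis by simp
qed

section \<open>Zigzags traced by periodic sequences of edges\<close>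

definition zigzag_triple :: "'v set set \<Rightarrow> 'v set \<Rightarrow> 'v set \<Rightarrow> 'v set \<Rightarrow> bool" where
  "zigzag_triple F e0 e1 e2 \<longleftrightarrow> common_face F e0 e1 \<and> common_face F e1 e2 \<and>
     e0 \<union> e1 \<noteq> e1 \<union> e2 \<and> e0 \<inter> e2 = {}"

lemma zigzag_triple_commute: "zigzag_triple F e0 e1 e2 \<longleftrightarrow> zigzag_triple F e2 e1 e0"
  unfolding zigzag_triple_def common_face_def by (auto simp: Un_commute Int_commute)

lemma zigzag_triple_reflect:
  fixes f :: "int \<Rightarrow> 'v set"
  assumes "\<And>m. zigzag_triple F (f m) (f (m + 1)) (f (m + 2))"
  shows "zigzag_triple F (f (- m)) (f (- (m + 1))) (f (- (m + 2)))"
proof -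
  have e: "- (m + 2) + 1 = - (m + 1)" "- (m + 2) + 2 = - m" by simp_all
  have "zigzag_triple F (f (- (m + 2))) (f (- (m + 1))) (f (- m))"
    using assms[of "- (m + 2)"] unfolding e .
  then show ?thesis by (subst zigzag_triple_commute)
qed

lemma zigzag_word_iff:
  "zigzag_word F xs \<longleftrightarrow> xs \<noteq> [] \<and>
     (\<forall>i < length xs. zigzag_triple F (xs ! i) (xs ! ((i+1) mod length xs)) (xs ! ((i+2) mod length xs))) \<and>
     (\<forall>k. 0 < k \<and> k < length xs \<longrightarrow> rotate k xs \<noteq> xs)"
  unfolding zigzag_word_def zigzag_triple_def Let_def ..

lemma zigzag_word_triple:
  assumes "zigzag_word F xs"
  shows "zigzag_triple F (xs ! (j mod length xs)) (xs ! ((j+1) mod length xs)) (xs ! ((j+2) mod length xs))"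
proof -
  let ?L = "length xs"
  have "xs \<noteq> []" and triples: "\<forall>i < ?L. zigzag_triple F (xs ! i) (xs ! ((i+1) mod ?L)) (xs ! ((i+2) mod ?L))"
    using assms by (simp_all add: zigzag_word_iff)
  then have "zigzag_triple F (xs ! (j mod ?L)) (xs ! ((j mod ?L + 1) mod ?L)) (xs ! ((j mod ?L + 2) mod ?L))"
    by simp
  then show ?thesis by (simp only: mod_add_left_eq)
qed

lemma zigzag_word_period_list:
  assumes P: "minimal_period f P" and f: "\<And>m. zigzag_triple F (f m) (f (m+1)) (f (m+2))"
  shows "zigzag_word F (period_list f P)"
  unfolding zigzag_word_iff
proof (intro conjI allI impI)
  have per: "\<And>m. f (m + int P) = f m" and "0 < P" using P by (auto simp: minimal_period_def)
  note nth = nth_mod_period_list[of f P, OF per \<open>0 < P\<close>]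
  show "period_list f P \<noteq> []" using \<open>0 < P\<close> by (simp add: period_list_def)
  show "zigzag_triple F (period_list f P ! i) (period_list f P ! ((i+1) mod length (period_list f P)))
          (period_list f P ! ((i+2) mod length (period_list f P)))" if "i < length (period_list f P)" for i
    using that f[of "int i"] nth[of "i+1"] nth[of "i+2"] by (simp add: add_ac)
  show "rotate k (period_list f P) \<noteq> period_list f P" if k: "0 < k \<and> k < length (period_list f P)" for k
  proof
    assume rot: "rotate k (period_list f P) = period_list f P"
    have "f (m + int k) = f m" for m
    proof -
      define j where "j = nat (m mod int P)"
      have j: "int j = m mod int P" "j < P" using \<open>0 < P\<close> by (auto simp: j_def nat_less_iff)
      have "f (int (k + j)) = f (int j)"
        using arg_cong[OF rot, of "\<lambda>xs. xs ! j"] j(2) nth[of "k + j"] by (simp add: nth_rotate)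
      moreover have "f (int (k + j)) = f (m + int k)"
        using periodic_mod[of f "int P", OF per, of "m + int k"] periodic_mod[of f "int P", OF per, of "int (k + j)"]
        by (simp add: j(1) mod_add_right_eq add.commute)
      moreover have "f (int j) = f m" using j(1) periodic_mod[of f "int P", OF per, of m] by simp
      ultimately show ?thesis by simp
    qed
    then show False using P k by (auto simp: minimal_period_def)
  qed
qed

definition zigzag_deterministic :: "'v set set \<Rightarrow> bool" where
  "zigzag_deterministic F \<longleftrightarrow>
     (\<forall>e0 e1 e2 e2'. zigzag_triple F e0 e1 e2 \<longrightarrow> zigzag_triple F e0 e1 e2' \<longrightarrow> e2 = e2')"

lemma zigzag_word_follows_sequence:
  assumes xs: "zigzag_word F xs" and unique: "zigzag_deterministic F"
    and f: "\<And>m. zigzag_triple F (f m) (f (m+1)) (f (m+2))"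
    and start: "xs ! (0 mod length xs) = f m" "xs ! (1 mod length xs) = f (m + 1)"
  shows "xs ! (j mod length xs) = f (m + int j)"
proof -
  let ?x = "\<lambda>j. xs ! (j mod length xs)"
  have "?x j = f (m + int j) \<and> ?x (j+1) = f (m + int j + 1)" for j
  proof (induction j)
    case 0
    then show ?case using start by simp
  next
    case (Suc j)
    have "zigzag_triple F (?x j) (?x (j+1)) (f (m + int j + 2))"
      using f[of "m + int j"] Suc.IH by (simp add: add.assoc)
    then have "?x (j+2) = f (m + int j + 2)"
      using unique zigzag_word_triple[OF xs, of j] unfolding zigzag_deterministic_def by blast
    then show ?case using Suc.IH by (simp add: algebra_simps)
  qed
  then show ?thesis by blast
qed

text \<open>\<open>length xs\<close> is a period of \<open>f\<close>, hence a multiple of \<open>P\<close>; and \<open>P\<close> is a period of the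
  primitive word \<open>xs\<close>, hence at least its length.\<close>

lemma cyc_zigzag_word_eq_period_list:
  assumes xs: "zigzag_word F xs" and P: "minimal_period f P"
    and x: "\<And>j. xs ! (j mod length xs) = f (m + int j)"
  shows "cyc xs = cyc (period_list f P)"
proof -
  let ?L = "length xs"
  have "0 < ?L" and prim: "\<And>k. 0 < k \<Longrightarrow> k < ?L \<Longrightarrow> rotate k xs \<noteq> xs"
    using xs by (auto simp: zigzag_word_iff)
  have "0 < P" and per: "\<And>y. f (y + int P) = f y"
    and minimal: "\<And>t. 0 < t \<Longrightarrow> t < P \<Longrightarrow> \<exists>y. f (y + int t) \<noteq> f y"
    using P by (auto simp: minimal_period_def)
  have perL: "f (y + int ?L) = f y" for y
  proof -
    define j where "j = nat ((y - m) mod int P)"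
    have y: "y = m + int j + int P * ((y - m) div int P)"
      using \<open>0 < P\<close> by (simp add: j_def)
    have "f (m + int j + int ?L) = f (m + int j)"
      using x[of "j + ?L"] x[of j] by (simp add: add.assoc)
    then show ?thesis
      using periodic_add_mult[of f "int P", OF per] y by (metis add.commute add.left_commute)
  qed
  have "P dvd ?L"
  proof (rule ccontr)
    assume "\<not> P dvd ?L"
    then have t: "0 < ?L mod P" "?L mod P < P" using \<open>0 < P\<close> by (auto simp: mod_greater_zero_iff_not_dvd)
    have "f (y + int (?L mod P)) = f y" for y
    proof -
      have "int ?L = int (?L mod P) + int P * int (?L div P)"
        by (metis of_nat_add of_nat_mult mod_mult_div_eq add.commute mult.commute)
      then have "f (y + int ?L) = f (y + int (?L mod P))"
        using periodic_add_mult[of f "int P", OF per, of "y + int (?L mod P)"] by (simp add: add.assoc)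
      then show ?thesis using perL by simp
    qed
    then show False using minimal[OF t] by blast
  qed
  moreover have "\<not> P < ?L"
  proof
    assume "P < ?L"
    moreover have "rotate P xs = xs"
    proof (rule nth_equalityI)
      fix i assume "i < length (rotate P xs)"
      then have "i < ?L" by simp
      then show "rotate P xs ! i = xs ! i"
        using x[of "P + i"] x[of i] per[of "m + int i"] by (simp add: nth_rotate algebra_simps)
    qed simp
    ultimately show False using prim \<open>0 < P\<close> by blast
  qed
  ultimately have L: "?L = P" using \<open>0 < ?L\<close> dvd_imp_le[of P ?L] by linarith
  have "xs = map (\<lambda>j. f (m + int j)) [0..<P]"
  proof (rule nth_equalityI)
    fix i assume "i < length xs"
    then show "xs ! i = map (\<lambda>j. f (m + int j)) [0..<P] ! i" using x[of i] L by simp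
  qed (simp add: L)
  also have "\<dots> = rotate (nat (m mod int P)) (period_list f P)"
    by (rule period_list_shift) (rule per)
  finally show ?thesis by simp
qed

lemma zigzag_triple_intro:
  assumes "e0 \<union> e1 \<in> F" "e1 \<union> e2 \<in> F" "card e0 = 2" "card e1 = 2" "card e2 = 2"
    "e0 \<noteq> e1" "e1 \<noteq> e2" "e0 \<union> e1 \<noteq> e1 \<union> e2" "e0 \<inter> e2 = {}"
  shows "zigzag_triple F e0 e1 e2"
proof -
  have edge: "e \<in> tri_edges F" if "card e = 2" "e \<subseteq> f" "f \<in> F" for e f
    using that unfolding tri_edges_def by blast
  have "e0 \<in> tri_edges F" "e1 \<in> tri_edges F" "e2 \<in> tri_edges F"
    using edge[OF assms(3) Un_upper1 assms(1)] edge[OF assms(4) Un_upper1 assms(2)]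
      edge[OF assms(5) Un_upper2 assms(2)] .
  then show ?thesis using assms unfolding zigzag_triple_def common_face_def by (simp add: Un_commute)
qed

lemma card_2_subset_triple:
  assumes "card e = 2" "e \<subseteq> {x, y, z}"
  shows "e = {x, y} \<or> e = {x, z} \<or> e = {y, z}"
proof -
  obtain a b where ab: "e = {a, b}" "a \<noteq> b" using assms(1) by (auto simp: card_2_iff)
  then have "a \<in> {x, y, z}" "b \<in> {x, y, z}" using assms(2) by auto
  then show ?thesis unfolding ab(1) using ab(2) by (elim insertE emptyE) (simp_all add: insert_commute)
qed

lemma doubleton_in_triple:
  "x \<in> {a, b, c} \<Longrightarrow> y \<in> {a, b, c} \<Longrightarrow> x \<noteq> y \<Longrightarrow> {x, y} = {a, b} \<or> {x, y} = {a, c} \<or> {x, y} = {b, c}"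
  by (auto simp: doubleton_eq_iff)

text \<open>The successor \<open>e2\<close> of \<open>e0, e1\<close> is the edge of the second face through \<open>e1\<close> that avoids
  the vertex shared by \<open>e0\<close> and \<open>e1\<close>.\<close>

lemma zigzag_deterministicI:
  assumes triangles: "\<And>f. f \<in> F \<Longrightarrow> card f = 3"
    and two_faces: "\<And>e. card e = 2 \<Longrightarrow> \<exists>f1 f2. \<forall>f\<in>F. e \<subseteq> f \<longrightarrow> f = f1 \<or> f = f2"
  shows "zigzag_deterministic F"
  unfolding zigzag_deterministic_def
proof (intro allI impI)
  fix e0 e1 e2 e2' assume "zigzag_triple F e0 e1 e2" "zigzag_triple F e0 e1 e2'"
  have F: "e0 \<union> e1 \<in> F" "e1 \<union> e2 \<in> F" "e1 \<union> e2' \<in> F"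
    and card: "card e0 = 2" "card e1 = 2" "card e2 = 2" "card e2' = 2"
    and turn: "e0 \<union> e1 \<noteq> e1 \<union> e2" "e0 \<union> e1 \<noteq> e1 \<union> e2'"
    and disj: "e0 \<inter> e2 = {}" "e0 \<inter> e2' = {}"
    using \<open>zigzag_triple F e0 e1 e2\<close> \<open>zigzag_triple F e0 e1 e2'\<close>
    unfolding zigzag_triple_def common_face_def tri_edges_def by simp_all
  obtain f1 f2 where "\<forall>f\<in>F. e1 \<subseteq> f \<longrightarrow> f = f1 \<or> f = f2" using two_faces[OF card(2)] by blast
  then have "e0 \<union> e1 \<in> {f1, f2}" "e1 \<union> e2 \<in> {f1, f2}" "e1 \<union> e2' \<in> {f1, f2}"
    using F by simp_all
  then have same_face: "e1 \<union> e2 = e1 \<union> e2'" using turn by (metis empty_iff insert_iff)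
  have fin: "finite e0" "finite e1" "finite e2" "finite e2'"
    using card by (simp_all add: card_ge_0_finite)
  have "e0 \<inter> e1 \<noteq> {}"
  proof
    assume "e0 \<inter> e1 = {}"
    then have "card (e0 \<union> e1) = 4" using card fin by (simp add: card_Un_disjoint)
    then show False using triangles[OF F(1)] by simp
  qed
  then obtain u where u: "u \<in> e0" "u \<in> e1" by blast
  let ?g = "e1 \<union> e2 - {u}"
  have g: "finite ?g" "card ?g = 2"
    using triangles[OF F(2)] u(2) fin by simp_all
  have "e2 \<subseteq> ?g" "e2' \<subseteq> ?g"
    using u disj same_face by auto
  then have "e2 = ?g" "e2' = ?g" using card g card_subset_eq by metis+
  then show "e2 = e2'" by simp
qed

section \<open>Faces of the bipyramid\<close>

locale ngon_bipyramid =
  fixes n :: nat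
  assumes three_le_n: "3 \<le> n"
begin

definition base :: "int \<Rightarrow> bpv" where
  "base x = Bv (nat (x mod int n))"

lemma base_eq_iff: "base x = base y \<longleftrightarrow> x mod int n = y mod int n"
proof -
  have "0 \<le> x mod int n" "0 \<le> y mod int n" using three_le_n by auto
  then show ?thesis unfolding base_def by auto
qed

lemma base_eqD: "base x = base y \<Longrightarrow> x = y \<or> 2 < \<bar>x - y\<bar>"
proof -
  assume "base x = base y"
  then have "int n dvd x - y" by (simp add: base_eq_iff mod_eq_dvd_iff)
  then have "x = y \<or> int n \<le> \<bar>x - y\<bar>" using dvd_imp_le_int[of "x - y" "int n"] by auto
  then show ?thesis using three_le_n by auto
qed

lemma base_neq_apex [simp]: "base x \<noteq> Ta" "base x \<noteq> Tb" "Ta \<noteq> base x" "Tb \<noteq> base x"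
  by (auto simp: base_def)

lemma base_add_one_neq [simp]: "base (x + 1) \<noteq> base x" "base x \<noteq> base (x + 1)"
  by (auto dest: base_eqD)

lemma base_add_cancel: "base (x + k) = base (y + k) \<longleftrightarrow> base x = base y"
  by (simp add: base_eq_iff mod_eq_dvd_iff)

lemma base_of_nat: "base (int i) = Bv (i mod n)"
  unfolding base_def by (simp flip: zmod_int)

lemma bipyramid_face_iff:
  "f \<in> bipyramid n \<longleftrightarrow> (\<exists>T p. T \<in> {Ta, Tb} \<and> f = {T, base p, base (p + 1)})"
proof
  assume "f \<in> bipyramid n"
  then obtain T i where "T \<in> {Ta, Tb}" "i < n" "f = {T, Bv i, Bv (Suc i mod n)}"
    unfolding bipyramid_def by auto
  then show "\<exists>T p. T \<in> {Ta, Tb} \<and> f = {T, base p, base (p + 1)}"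
    using base_of_nat[of i] base_of_nat[of "Suc i"]
    by (intro exI[of _ T] exI[of _ "int i"]) (simp add: add.commute)
next
  assume "\<exists>T p. T \<in> {Ta, Tb} \<and> f = {T, base p, base (p + 1)}"
  then obtain T p where T: "T \<in> {Ta, Tb}" and f: "f = {T, base p, base (p + 1)}" by blast
  define i where "i = nat (p mod int n)"
  have "i < n" "int i = p mod int n" using three_le_n by (auto simp: i_def nat_less_iff)
  then have "base p = base (int i)" by (simp add: base_eq_iff)
  moreover have "base (p + 1) = base (int i + 1)" using base_add_cancel calculation by blast
  moreover have "base (int i + 1) = Bv (Suc i mod n)" using base_of_nat[of "Suc i"] by (simp add: add.commute)
  ultimately have "f = {T, Bv i, Bv (Suc i mod n)}"
    unfolding f by (simp add: base_of_nat \<open>i < n\<close>)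
  then show "f \<in> bipyramid n" using T \<open>i < n\<close> unfolding bipyramid_def by blast
qed

lemma bipyramid_faceI: "T \<in> {Ta, Tb} \<Longrightarrow> {T, base p, base (p + 1)} \<in> bipyramid n"
  unfolding bipyramid_face_iff by blast

lemma card_bipyramid_face: "f \<in> bipyramid n \<Longrightarrow> card f = 3"
  by (auto simp: bipyramid_face_iff card_insert_if dest!: base_eqD)

lemma faces_through_apex_edge:
  assumes "f \<in> bipyramid n" "{T, base p} \<subseteq> f" "T \<in> {Ta, Tb}"
  shows "f = {T, base (p - 1), base p} \<or> f = {T, base p, base (p + 1)}"
proof -
  obtain T' q where T': "T' \<in> {Ta, Tb}" and f: "f = {T', base q, base (q + 1)}"
    using assms(1) by (auto simp: bipyramid_face_iff)
  have "T' = T" using assms(2,3) T' unfolding f by auto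
  moreover have "base p = base q \<or> base p = base (q + 1)" using assms(2,3) T' unfolding f by auto
  then have "base (p - 1) = base q \<and> base p = base (q + 1) \<or> base p = base q \<and> base (p + 1) = base (q + 1)"
    using base_add_cancel[of "p - 1" 1 q] base_add_cancel[of p 1 q] by auto
  ultimately show ?thesis unfolding f by auto
qed

lemma faces_through_base_edge:
  assumes "f \<in> bipyramid n" "{base p, base (p + 1)} \<subseteq> f"
  shows "f = {Ta, base p, base (p + 1)} \<or> f = {Tb, base p, base (p + 1)}"
proof -
  obtain T q where T: "T \<in> {Ta, Tb}" and f: "f = {T, base q, base (q + 1)}"
    using assms(1) by (auto simp: bipyramid_face_iff)
  have "base p = base q"
  proof (rule ccontr)
    assume "base p \<noteq> base q"
    then have p: "base p = base (q + 1)" using assms(2) T unfolding f by auto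
    then have "base (p + 1) \<noteq> base (q + 1)" by (metis base_add_one_neq(2))
    then have "base (p + 1) = base q" using assms(2) T unfolding f by auto
    then have "base (q + 2) = base q" using p base_add_cancel[of p 1 "q + 1"] by (simp add: add.assoc)
    then show False by (auto dest: base_eqD)
  qed
  then have "base (p + 1) = base (q + 1)" using base_add_cancel by blast
  then show ?thesis using T \<open>base p = base q\<close> unfolding f by auto
qed

lemma bipyramid_two_faces:
  assumes "card e = 2"
  shows "\<exists>f1 f2. \<forall>f\<in>bipyramid n. e \<subseteq> f \<longrightarrow> f = f1 \<or> f = f2"
proof (cases "\<exists>f\<in>bipyramid n. e \<subseteq> f")
  case True
  then obtain f where "f \<in> bipyramid n" "e \<subseteq> f" by blast
  moreover obtain T p where T: "T \<in> {Ta, Tb}" and "f = {T, base p, base (p + 1)}"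
    using \<open>f \<in> bipyramid n\<close> unfolding bipyramid_face_iff by blast
  ultimately have e: "e \<subseteq> {T, base p, base (p + 1)}" by simp
  consider "e = {T, base p}" | "e = {T, base (p + 1)}" | "e = {base p, base (p + 1)}"
    using card_2_subset_triple[OF assms e] by blast
  then show ?thesis
  proof cases
    case 1
    then show ?thesis using faces_through_apex_edge[OF _ _ T, of _ p]
      by (intro exI[of _ "{T, base (p - 1), base p}"] exI[of _ "{T, base p, base (p + 1)}"]) simp
  next
    case 2
    then show ?thesis using faces_through_apex_edge[OF _ _ T, of _ "p + 1"]
      by (intro exI[of _ "{T, base p, base (p + 1)}"] exI[of _ "{T, base (p + 1), base (p + 1 + 1)}"]) simp
  next
    case 3
    then show ?thesis using faces_through_base_edge[of _ p]
      by (intro exI[of _ "{Ta, base p, base (p + 1)}"] exI[of _ "{Tb, base p, base (p + 1)}"]) simp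
  qed
qed blast

lemma zigzag_deterministic_bipyramid: "zigzag_deterministic (bipyramid n)"
  by (rule zigzag_deterministicI[OF card_bipyramid_face bipyramid_two_faces])

end

section \<open>The zigzag through an apex edge\<close>

lemma div_gcd_dvd_of_dvd_mult:
  fixes n a q :: nat
  assumes "n dvd a * q" "0 < a"
  shows "n div gcd a n dvd q"
proof -
  let ?g = "gcd a n"
  have "0 < ?g" using assms(2) by simp
  have "n = ?g * (n div ?g)" "a = ?g * (a div ?g)" by simp_all
  then have "?g * (n div ?g) dvd ?g * ((a div ?g) * q)" using assms(1) by (metis mult.assoc)
  then have "n div ?g dvd (a div ?g) * q" using nat_mult_dvd_cancel1[OF \<open>0 < ?g\<close>] by blast
  moreover have "coprime (n div ?g) (a div ?g)"
    using div_gcd_coprime[of n a] assms(2) by (simp add: gcd.commute)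
  ultimately show ?thesis by (simp add: coprime_dvd_mult_right_iff)
qed

context ngon_bipyramid
begin

definition zigzag_edge :: "int \<Rightarrow> int \<Rightarrow> bpv set" where
  "zigzag_edge c m = (let j = c + 4 * (m div 6) in
     if m mod 6 = 0 then {Ta, base j}
     else if m mod 6 = 1 then {base j, base (j + 1)}
     else if m mod 6 = 2 then {Tb, base (j + 1)}
     else if m mod 6 = 3 then {Tb, base (j + 2)}
     else if m mod 6 = 4 then {base (j + 2), base (j + 3)}
     else {Ta, base (j + 3)})"

lemma zigzag_edge_add_6: "zigzag_edge c (m + 6 * t) = zigzag_edge (c + 4 * t) m"
  unfolding zigzag_edge_def Let_def by (simp add: algebra_simps)

lemma zigzag_edge_phase: "zigzag_edge c (m + k) = zigzag_edge (c + 4 * (m div 6)) (m mod 6 + k)"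
proof -
  have "m + k = m mod 6 + k + 6 * (m div 6)" by simp
  then show ?thesis by (metis zigzag_edge_add_6)
qed

lemma zigzag_edge_cong: "c mod int n = d mod int n \<Longrightarrow> zigzag_edge c = zigzag_edge d"
proof -
  assume "c mod int n = d mod int n"
  then have "base (c + k) = base (d + k)" for k using base_add_cancel base_eq_iff by metis
  then show ?thesis unfolding zigzag_edge_def Let_def by (auto simp: fun_eq_iff add.assoc)
qed

lemma zigzag_edge_triple:
  "zigzag_triple (bipyramid n) (zigzag_edge c m) (zigzag_edge c (m + 1)) (zigzag_edge c (m + 2))"
proof -
  have face: "{T, base p, base q} \<in> bipyramid n" if "T \<in> {Ta, Tb}" "q = p + 1" for T p q
    using bipyramid_faceI that by blast
  note faces = face[of Ta, simplified] face[of Tb, simplified]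
  have "zigzag_triple (bipyramid n) (zigzag_edge c' r) (zigzag_edge c' (r + 1)) (zigzag_edge c' (r + 2))"
    if "r \<in> {0, 1, 2, 3, 4, 5}" for c' r
    using that
    apply (elim insertE; simp add: zigzag_edge_def; intro zigzag_triple_intro)
    apply (simp_all add: insert_commute faces card_insert_if doubleton_eq_iff)
    apply (auto simp: set_eq_subset dest!: base_eqD)
    done
  moreover have "m mod 6 \<in> {0, 1, 2, 3, 4, 5}" by auto
  ultimately show ?thesis
    using zigzag_edge_phase[of c m 0] zigzag_edge_phase[of c m 1] zigzag_edge_phase[of c m 2] by simp
qed

lemma zigzag_edge_pair:
  assumes T: "T \<in> {Ta, Tb}"
    and "e0 \<in> {{T, base p}, {T, base (p + 1)}, {base p, base (p + 1)}}"
    and "e1 \<in> {{T, base p}, {T, base (p + 1)}, {base p, base (p + 1)}}" "e0 \<noteq> e1"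
  shows "\<exists>c m. {e0, e1} = {zigzag_edge c m, zigzag_edge c (m + 1)}"
proof -
  have pair: "{e0, e1} = {{T, base p}, {T, base (p + 1)}} \<or> {e0, e1} = {{T, base p}, {base p, base (p + 1)}} \<or>
      {e0, e1} = {{T, base (p + 1)}, {base p, base (p + 1)}}"
    using doubleton_in_triple assms(2-4) .
  have "\<exists>c m. {e0, e1} = {zigzag_edge c m, zigzag_edge c (m + 1)}" if "T = Ta"
    using pair unfolding that
  proof (elim disjE)
    assume "{e0, e1} = {{Ta, base p}, {Ta, base (p + 1)}}"
    also have "\<dots> = {zigzag_edge (p - 3) 5, zigzag_edge (p - 3) (5 + 1)}" by (simp add: zigzag_edge_def add.commute)
    finally show ?thesis by blast
  next
    assume "{e0, e1} = {{Ta, base p}, {base p, base (p + 1)}}"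
    also have "\<dots> = {zigzag_edge p 0, zigzag_edge p (0 + 1)}" by (simp add: zigzag_edge_def add.commute)
    finally show ?thesis by blast
  next
    assume "{e0, e1} = {{Ta, base (p + 1)}, {base p, base (p + 1)}}"
    also have "\<dots> = {zigzag_edge (p - 2) 4, zigzag_edge (p - 2) (4 + 1)}" by (simp add: zigzag_edge_def insert_commute add.commute)
    finally show ?thesis by blast
  qed
  moreover have "\<exists>c m. {e0, e1} = {zigzag_edge c m, zigzag_edge c (m + 1)}" if "T = Tb"
    using pair unfolding that
  proof (elim disjE)
    assume "{e0, e1} = {{Tb, base p}, {Tb, base (p + 1)}}"
    also have "\<dots> = {zigzag_edge (p - 1) 2, zigzag_edge (p - 1) (2 + 1)}" by (simp add: zigzag_edge_def add.commute)
    finally show ?thesis by blast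
  next
    assume "{e0, e1} = {{Tb, base p}, {base p, base (p + 1)}}"
    also have "\<dots> = {zigzag_edge (p - 2) 3, zigzag_edge (p - 2) (3 + 1)}" by (simp add: zigzag_edge_def insert_commute add.commute)
    finally show ?thesis by blast
  next
    assume "{e0, e1} = {{Tb, base (p + 1)}, {base p, base (p + 1)}}"
    also have "\<dots> = {zigzag_edge p 1, zigzag_edge p (1 + 1)}" by (simp add: zigzag_edge_def insert_commute add.commute)
    finally show ?thesis by blast
  qed
  ultimately show ?thesis using T by blast
qed

lemma common_face_zigzag_edges:
  assumes "common_face (bipyramid n) e0 e1"
  shows "\<exists>c m. e0 = zigzag_edge c m \<and> e1 = zigzag_edge c (m + 1) \<or>
                e0 = zigzag_edge c (m + 1) \<and> e1 = zigzag_edge c m"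
proof -
  have "e0 \<in> tri_edges (bipyramid n)" "e1 \<in> tri_edges (bipyramid n)" "e0 \<noteq> e1"
    and face: "e0 \<union> e1 \<in> bipyramid n"
    using assms unfolding common_face_def by blast+
  then have card: "card e0 = 2" "card e1 = 2" by (simp_all add: tri_edges_def)
  obtain T p where T: "T \<in> {Ta, Tb}" and f: "e0 \<union> e1 = {T, base p, base (p + 1)}"
    using face unfolding bipyramid_face_iff by blast
  have "e0 \<subseteq> e0 \<union> e1" "e1 \<subseteq> e0 \<union> e1" by simp_all
  then have e: "e0 \<in> {{T, base p}, {T, base (p + 1)}, {base p, base (p + 1)}}"
    "e1 \<in> {{T, base p}, {T, base (p + 1)}, {base p, base (p + 1)}}"
    using card_2_subset_triple[OF card(1)] card_2_subset_triple[OF card(2)] unfolding f by simp_all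
  then obtain c m where "{e0, e1} = {zigzag_edge c m, zigzag_edge c (m + 1)}"
    using zigzag_edge_pair[OF T e \<open>e0 \<noteq> e1\<close>] by blast
  then show ?thesis by (metis doubleton_eq_iff)
qed

definition zigzag_period :: nat where
  "zigzag_period = 6 * (n div gcd 4 n)"

lemma zigzag_period_pos: "0 < zigzag_period"
  using three_le_n by (simp add: zigzag_period_def div_greater_zero_iff gcd_le2_nat)

lemma six_le_zigzag_period: "6 \<le> zigzag_period"
  using zigzag_period_pos by (simp add: zigzag_period_def)

lemma zigzag_edge_period: "zigzag_edge c (m + int zigzag_period) = zigzag_edge c m"
proof -
  have "zigzag_edge c (m + int zigzag_period) = zigzag_edge (c + 4 * int (n div gcd 4 n)) m"
    using zigzag_edge_add_6[of c m "int (n div gcd 4 n)"] by (simp add: zigzag_period_def)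
  also have "4 * int (n div gcd 4 n) = int n * int (4 div gcd 4 n)"
    by (metis div_mult_swap gcd_dvd1 gcd_dvd2 mult.commute of_nat_mult of_nat_numeral)
  also have "zigzag_edge (c + int n * int (4 div gcd 4 n)) = zigzag_edge c"
    by (rule zigzag_edge_cong) simp
  finally show ?thesis .
qed

lemma zigzag_edge_leaving_apex:
  assumes "zigzag_edge c t = {Ta, base x}" "Ta \<notin> zigzag_edge c (t + 1)"
  shows "t mod 6 = 0 \<and> base (c + 4 * (t div 6)) = base x \<and> zigzag_edge c (t + 1) = {base x, base (x + 1)}"
proof -
  define c' where "c' = c + 4 * (t div 6)"
  have t: "zigzag_edge c' (t mod 6) = {Ta, base x}" "Ta \<notin> zigzag_edge c' (t mod 6 + 1)"
    using assms zigzag_edge_phase[of c t 0] zigzag_edge_phase[of c t 1] by (simp_all add: c'_def)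
  have "t mod 6 \<in> {0, 1, 2, 3, 4, 5}" by auto
  then have "t mod 6 = 0 \<and> base c' = base x"
    using t by (elim insertE) (simp_all add: zigzag_edge_def doubleton_eq_iff)
  moreover have "zigzag_edge c (t + 1) = zigzag_edge c' (t mod 6 + 1)"
    using zigzag_edge_phase[of c t 1] by (simp add: c'_def)
  ultimately show ?thesis
    using base_add_cancel[of c' 1 x] by (simp add: zigzag_edge_def c'_def)
qed

lemma minimal_period_zigzag_edge: "minimal_period (zigzag_edge c) zigzag_period"
  unfolding minimal_period_def
proof (intro conjI allI impI zigzag_period_pos zigzag_edge_period)
  fix t assume t: "0 < t \<and> t < zigzag_period"
  show "\<exists>m. zigzag_edge c (m + int t) \<noteq> zigzag_edge c m"
  proof (rule ccontr)
    assume "\<not> ?thesis"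
    then have shift: "zigzag_edge c (m + int t) = zigzag_edge c m" for m by blast
    have "zigzag_edge c (int t) = {Ta, base c}" "zigzag_edge c (int t + 1) = {base c, base (c + 1)}"
      using shift[of 0] shift[of 1] by (simp_all add: zigzag_edge_def add.commute)
    then have "int t mod 6 = 0" "base (c + 4 * (int t div 6)) = base c"
      using zigzag_edge_leaving_apex[of c "int t" c] by simp_all
    then have "6 dvd t" "int n dvd 4 * int (t div 6)"
      by (presburger, simp add: base_eq_iff mod_eq_dvd_iff zdiv_int)
    then have t6: "t = 6 * (t div 6)" and "n dvd 4 * (t div 6)"
      using int_dvd_int_iff[of n "4 * (t div 6)"] by simp_all
    from \<open>n dvd 4 * (t div 6)\<close> have "n div gcd 4 n dvd t div 6" by (rule div_gcd_dvd_of_dvd_mult) simp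
    moreover have "0 < t div 6" using t t6 by presburger
    ultimately have "n div gcd 4 n \<le> t div 6" by (rule dvd_imp_le)
    then have "zigzag_period \<le> t" unfolding zigzag_period_def using t6 by linarith
    then show False using t by simp
  qed
qed

section \<open>Counting the zigzags\<close>

definition zigzag_list :: "int \<Rightarrow> bpv set list" where
  "zigzag_list c = period_list (zigzag_edge c) zigzag_period"

lemma nth_rotate_zigzag_list:
  "i < zigzag_period \<Longrightarrow> rotate k (zigzag_list c) ! i = zigzag_edge c (int k + int i)"
  unfolding zigzag_list_def by (rule nth_rotate_period_list) (rule zigzag_edge_period)

lemma cyc_rev_zigzag_list:
  "cyc (rev (zigzag_list c)) = cyc (period_list (\<lambda>y. zigzag_edge c (- y)) zigzag_period)"
  unfolding zigzag_list_def by (rule cyc_rev_period_list) (rule zigzag_edge_period)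

lemma cyc_zigzag_list_in_zigzags:
  "cyc (zigzag_list c) \<in> zigzags (bipyramid n)" "cyc (rev (zigzag_list c)) \<in> zigzags (bipyramid n)"
proof -
  have "zigzag_word (bipyramid n) (zigzag_list c)"
    unfolding zigzag_list_def by (rule zigzag_word_period_list[OF minimal_period_zigzag_edge zigzag_edge_triple])
  then show "cyc (zigzag_list c) \<in> zigzags (bipyramid n)" unfolding zigzags_def by blast
  have "zigzag_word (bipyramid n) (period_list (\<lambda>y. zigzag_edge c (- y)) zigzag_period)"
    by (rule zigzag_word_period_list[OF minimal_period_reflect[OF minimal_period_zigzag_edge]])
      (rule zigzag_triple_reflect[OF zigzag_edge_triple])
  then show "cyc (rev (zigzag_list c)) \<in> zigzags (bipyramid n)"
    unfolding zigzags_def cyc_rev_zigzag_list by blast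
qed

lemma zigzag_word_bipyramid_cases:
  assumes xs: "zigzag_word (bipyramid n) xs"
  shows "\<exists>c. cyc xs = cyc (zigzag_list c) \<or> cyc xs = cyc (rev (zigzag_list c))"
proof -
  let ?x = "\<lambda>j. xs ! (j mod length xs)"
  have "common_face (bipyramid n) (?x 0) (?x 1)"
    using zigzag_word_triple[OF xs, of 0] unfolding zigzag_triple_def by simp
  then obtain c m where "?x 0 = zigzag_edge c m \<and> ?x 1 = zigzag_edge c (m + 1) \<or>
      ?x 0 = zigzag_edge c (m + 1) \<and> ?x 1 = zigzag_edge c m"
    using common_face_zigzag_edges by blast
  then show ?thesis
  proof
    assume "?x 0 = zigzag_edge c m \<and> ?x 1 = zigzag_edge c (m + 1)"
    then have "?x j = zigzag_edge c (m + int j)" for j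
      using zigzag_word_follows_sequence[where f = "zigzag_edge c",
          OF xs zigzag_deterministic_bipyramid zigzag_edge_triple] by blast
    then have "cyc xs = cyc (zigzag_list c)"
      unfolding zigzag_list_def by (rule cyc_zigzag_word_eq_period_list[OF xs minimal_period_zigzag_edge])
    then show ?thesis by blast
  next
    assume start: "?x 0 = zigzag_edge c (m + 1) \<and> ?x 1 = zigzag_edge c m"
    have "?x 0 = zigzag_edge c (- (- (m + 1)))" "?x 1 = zigzag_edge c (- (- (m + 1) + 1))"
      using start by (simp_all add: add.commute)
    then have "?x j = zigzag_edge c (- (- (m + 1) + int j))" for j
      by (rule zigzag_word_follows_sequence[where f = "\<lambda>y. zigzag_edge c (- y)",
          OF xs zigzag_deterministic_bipyramid zigzag_triple_reflect[OF zigzag_edge_triple]])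
    then have "cyc xs = cyc (period_list (\<lambda>y. zigzag_edge c (- y)) zigzag_period)"
      by (rule cyc_zigzag_word_eq_period_list[OF xs minimal_period_reflect[OF minimal_period_zigzag_edge]])
    then show ?thesis unfolding cyc_rev_zigzag_list[symmetric] by blast
  qed
qed

lemma cyc_zigzag_list_add_4: "cyc (zigzag_list (c + 4 * t)) = cyc (zigzag_list c)"
proof -
  have "zigzag_list (c + 4 * t) = map (\<lambda>j. zigzag_edge c (6 * t + int j)) [0..<zigzag_period]"
    unfolding zigzag_list_def period_list_def using zigzag_edge_add_6[of c _ t] by (simp add: add.commute)
  also have "\<dots> = rotate (nat (6 * t mod int zigzag_period)) (zigzag_list c)"
    unfolding zigzag_list_def by (rule period_list_shift) (rule zigzag_edge_period)
  finally show ?thesis by simp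
qed

text \<open>By Bezout, \<open>c \<equiv> c mod g + 4 t (mod n)\<close> for some \<open>t\<close>, where \<open>g = gcd 4 n\<close>.\<close>

lemma cyc_zigzag_list_mod_gcd: "cyc (zigzag_list c) = cyc (zigzag_list (c mod int (gcd 4 n)))"
proof -
  define g where "g = int (gcd 4 n)"
  define d where "d = c mod g"
  define e where "e = c div g"
  have "gcd 4 (int n) = g" unfolding g_def using gcd_int_int_eq[of 4 n] by simp
  then obtain u v where uv: "u * 4 + v * int n = g" using bezout_int[of 4 "int n"] by auto
  have "c = d + g * e" by (simp add: d_def e_def)
  also have "g * e = 4 * (u * e) + int n * (v * e)" unfolding uv[symmetric] by (simp add: algebra_simps)
  finally have "c mod int n = (d + 4 * (u * e)) mod int n" by (simp add: add.assoc[symmetric])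
  then have "zigzag_list c = zigzag_list (d + 4 * (u * e))"
    unfolding zigzag_list_def by (metis zigzag_edge_cong)
  then show ?thesis by (simp add: cyc_zigzag_list_add_4 d_def g_def)
qed

lemma cyc_zigzag_list_eqD:
  assumes "cyc (zigzag_list c) = cyc (zigzag_list d)"
  shows "c mod int (gcd 4 n) = d mod int (gcd 4 n)"
proof -
  obtain k where k: "zigzag_list d = rotate k (zigzag_list c)" using cyc_eqD[OF assms] by blast
  have "zigzag_list d ! 0 = {Ta, base d}" "zigzag_list d ! 1 = {base d, base (d + 1)}"
    using six_le_zigzag_period by (simp_all add: zigzag_list_def zigzag_edge_def)
  then have "zigzag_edge c (int k) = {Ta, base d}" "zigzag_edge c (int k + 1) = {base d, base (d + 1)}"
    using nth_rotate_zigzag_list[of 0 k c] nth_rotate_zigzag_list[of 1 k c] six_le_zigzag_period k by simp_all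
  then have "base (c + 4 * (int k div 6)) = base d"
    using zigzag_edge_leaving_apex[of c "int k" d] by simp
  then have "int n dvd (c + 4 * (int k div 6)) - d" by (simp add: base_eq_iff mod_eq_dvd_iff)
  moreover have "int (gcd 4 n) dvd int n" by simp
  ultimately have "int (gcd 4 n) dvd (c + 4 * (int k div 6)) - d" by (rule dvd_trans[rotated])
  moreover have "int (gcd 4 n) dvd 4 * (int k div 6)"
    using int_dvd_int_iff[of "gcd 4 n" 4] by (intro dvd_mult2) simp
  ultimately have "int (gcd 4 n) dvd (c + 4 * (int k div 6) - d) - 4 * (int k div 6)"
    by (rule dvd_diff)
  then show ?thesis by (simp add: mod_eq_dvd_iff)
qed

text \<open>In \<open>Z\<^sub>c\<close> an edge \<open>a i\<close> followed by a base edge is followed by \<open>i (i+1)\<close>; in a reversed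
  zigzag it is followed by \<open>(i-1) i\<close>.\<close>

lemma cyc_zigzag_list_neq_rev: "cyc (zigzag_list c) \<noteq> cyc (rev (zigzag_list d))"
proof
  assume "cyc (zigzag_list c) = cyc (rev (zigzag_list d))"
  then obtain k where k: "rev (zigzag_list d) = rotate k (zigzag_list c)" using cyc_eqD by blast
  have "rev (zigzag_list d) ! 0 = zigzag_edge d (int zigzag_period - 1)"
    "rev (zigzag_list d) ! 1 = zigzag_edge d (int zigzag_period - 2)"
    using six_le_zigzag_period by (simp_all add: zigzag_list_def rev_nth of_nat_diff)
  moreover have "zigzag_edge d (int zigzag_period - 1) = {Ta, base (d - 1)}"
    "zigzag_edge d (int zigzag_period - 2) = {base (d - 2), base (d - 1)}"
    using zigzag_edge_period[of d "-1"] zigzag_edge_period[of d "-2"] by (simp_all add: zigzag_edge_def)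
  ultimately have "zigzag_edge c (int k) = {Ta, base (d - 1)}"
    and next_edge: "zigzag_edge c (int k + 1) = {base (d - 2), base (d - 1)}"
    using nth_rotate_zigzag_list[of 0 k c] nth_rotate_zigzag_list[of 1 k c] six_le_zigzag_period k by simp_all
  then have "zigzag_edge c (int k + 1) = {base (d - 1), base (d - 1 + 1)}"
    using zigzag_edge_leaving_apex[of c "int k" "d - 1"] by simp
  then have "{base (d - 1), base d} = {base (d - 2), base (d - 1)}" using next_edge by simp
  then have "base d = base (d - 2)" by (auto simp: doubleton_eq_iff)
  then show False by (auto dest: base_eqD)
qed

lemma zigzags_bipyramid:
  "zigzags (bipyramid n) = (\<lambda>d. cyc (zigzag_list d)) ` {0..<int (gcd 4 n)} \<union>
     (\<lambda>d. cyc (rev (zigzag_list d))) ` {0..<int (gcd 4 n)}" (is "_ = ?W ` ?D \<union> ?R ` ?D")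
proof (intro equalityI subsetI)
  fix Z assume "Z \<in> zigzags (bipyramid n)"
  then obtain xs where Z: "Z = cyc xs" and "zigzag_word (bipyramid n) xs" unfolding zigzags_def by blast
  then obtain c where "Z = cyc (zigzag_list c) \<or> Z = cyc (rev (zigzag_list c))"
    using zigzag_word_bipyramid_cases by blast
  moreover have "c mod int (gcd 4 n) \<in> ?D" by simp
  moreover have "cyc (rev (zigzag_list c)) = cyc (rev (zigzag_list (c mod int (gcd 4 n))))"
    using cyc_zigzag_list_mod_gcd[of c] by (simp flip: zz_rev_cyc)
  ultimately show "Z \<in> ?W ` ?D \<union> ?R ` ?D" using cyc_zigzag_list_mod_gcd[of c] by blast
next
  fix Z assume "Z \<in> ?W ` ?D \<union> ?R ` ?D"
  then show "Z \<in> zigzags (bipyramid n)" using cyc_zigzag_list_in_zigzags by blast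
qed

lemma zigzags_up_to_reversal_bipyramid:
  "zigzags_up_to_reversal (bipyramid n) =
     (\<lambda>d. {cyc (zigzag_list d), cyc (rev (zigzag_list d))}) ` {0..<int (gcd 4 n)}"
proof -
  have "zigzags_up_to_reversal (bipyramid n) = (\<lambda>Z. {Z, zz_rev Z}) ` zigzags (bipyramid n)"
    unfolding zigzags_up_to_reversal_def by blast
  also have "\<dots> = (\<lambda>d. {cyc (zigzag_list d), cyc (rev (zigzag_list d))}) ` {0..<int (gcd 4 n)}"
    unfolding zigzags_bipyramid image_Un image_image zz_rev_cyc rev_rev_ident by (auto simp: insert_commute)
  finally show ?thesis .
qed

lemma card_zigzags_up_to_reversal_bipyramid:
  "card (zigzags_up_to_reversal (bipyramid n)) = gcd 4 n"
proof -
  have "inj_on (\<lambda>d. {cyc (zigzag_list d), cyc (rev (zigzag_list d))}) {0..<int (gcd 4 n)}"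
  proof (rule inj_onI)
    fix d d' assume "d \<in> {0..<int (gcd 4 n)}" "d' \<in> {0..<int (gcd 4 n)}"
      and "{cyc (zigzag_list d), cyc (rev (zigzag_list d))} = {cyc (zigzag_list d'), cyc (rev (zigzag_list d'))}"
    then have "cyc (zigzag_list d) = cyc (zigzag_list d')"
      using cyc_zigzag_list_neq_rev by (auto simp: doubleton_eq_iff)
    then have "d mod int (gcd 4 n) = d' mod int (gcd 4 n)" by (rule cyc_zigzag_list_eqD)
    then show "d = d'" using \<open>d \<in> _\<close> \<open>d' \<in> _\<close> by simp
  qed
  then show ?thesis unfolding zigzags_up_to_reversal_bipyramid by (simp add: card_image)
qed

lemma z_knotted_bipyramid:
  assumes "gcd 4 n = 1"
  shows "z_knotted (bipyramid n)"
proof -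
  have "{0..<1::int} = {0}" by auto
  then have "zigzags (bipyramid n) = {cyc (zigzag_list 0), zz_rev (cyc (zigzag_list 0))}"
    unfolding zigzags_bipyramid assms by (simp add: zz_rev_cyc insert_commute)
  moreover have "cyc (zigzag_list 0) \<noteq> zz_rev (cyc (zigzag_list 0))"
    using cyc_zigzag_list_neq_rev by (simp add: zz_rev_cyc)
  ultimately show ?thesis unfolding z_knotted_def by blast
qed

end

lemma gcd_4_odd: "odd (n::nat) \<Longrightarrow> gcd 4 n = 1"
proof -
  assume "odd n"
  then have "coprime 2 n" by (simp add: coprime_commute)
  then have "coprime (2 ^ 2) n" by (simp only: coprime_power_left_iff) simp
  then show ?thesis by (simp add: coprime_iff_gcd_eq_1)
qed

lemma gcd_4_double_odd: "odd (k::nat) \<Longrightarrow> gcd 4 (2 * k) = 2"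
proof -
  assume "odd k"
  have "gcd 4 (2 * k) = 2 * gcd 2 k" by (metis gcd_mult_distrib_nat mult_2 numeral_Bit0)
  moreover have "gcd 2 k = 1" using \<open>odd k\<close> by (simp add: coprime_commute coprime_iff_gcd_eq_1[symmetric])
  ultimately show ?thesis by simp
qed

lemma gcd_4_double_even: "even (k::nat) \<Longrightarrow> gcd 4 (2 * k) = 4"
  by (auto elim!: evenE)

theorem mainTheorem9:
  fixes n :: nat
  assumes "n \<ge> 3"
  shows "(odd n \<longrightarrow> z_knotted (bipyramid n))
       \<and> (\<forall>k. n = 2 * k \<and> odd k \<longrightarrow> card (zigzags_up_to_reversal (bipyramid n)) = 2)
       \<and> (\<forall>k. n = 2 * k \<and> even k \<longrightarrow> card (zigzags_up_to_reversal (bipyramid n)) = 4)"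
proof -
  interpret ngon_bipyramid n using assms by unfold_locales
  show ?thesis
  proof (intro conjI allI impI)
    assume "odd n"
    then show "z_knotted (bipyramid n)" by (intro z_knotted_bipyramid gcd_4_odd)
  next
    fix k assume "n = 2 * k \<and> odd k"
    then show "card (zigzags_up_to_reversal (bipyramid n)) = 2"
      using card_zigzags_up_to_reversal_bipyramid gcd_4_double_odd by auto
  next
    fix k assume "n = 2 * k \<and> even k"
    then show "card (zigzags_up_to_reversal (bipyramid n)) = 4"
      using card_zigzags_up_to_reversal_bipyramid gcd_4_double_even by auto
  qed
qed

end
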